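(* Under the setting and conditions of the context, suppose in addition that the base procedure satisfies $\mathbb{E}[\mathrm{Regret}_T^{\mathrm{base}}(a,b)]=\Omega(T)$. Then $\mathbb{E}[\mathrm{Regret}_T^{\mathrm{DOMT}}(a,b)]=\mathbb{E}[\mathrm{Regret}_T^{\mathrm{base}}(a,b)]+\mathcal{O}(\sqrt T)$, and $\mathbb{E}[\mathrm{Regret}_T^{\mathrm{DOMT}}(a,b)]=\Theta(T)$.
   Context: Data model: states $Y_t\in\{0,1\}$; conditionally on the states and the past, $p_t\sim\mathrm{Uniform}[0,1]$ if $Y_t=0$ and $p_t\sim G$ if $Y_t=1$, where $G$ is a continuous strictly increasing CDF on $[0,1]$, $G(0)=0,G(1)=1$, and $G$ is $L$-Lipschitz for some $L\ge1$. A base procedure computes $\lambda_t^{\mathrm{base}}\in[0,1]$ from the virtual history $(p_s,\lambda_s^{\mathrm{base}},\delta_s^{\mathrm{base}})_{s\le t-1}$, virtual decisions $\delta_t^{\mathrm{base}}=\mathbf{1}\{p_t\le\lambda_t^{\mathrm{base}}\}$, and there is $\eta>0$ with $\liminf_T R_T^{\mathrm{base}}/T\ge\eta$ a.s., where $R_T^{\mathrm{base}}=\sum_{t\le T}\delta_t^{\mathrm{base}}$. DOMT with $\kappa\ge0$, $\alpha\in(0,1)$: $Z_t$ i.i.d. $\mathrm{Uniform}[0,1]$ independent of everything else, $\epsilon_t=\kappa\alpha/\sqrt t$, $\xi_t=\epsilon_tZ_t$, $\lambda_t=\min(1,\lambda_t^{\mathrm{base}}+\xi_t)$, actual decisions $\delta_t=\mathbf{1}\{p_t\le\lambda_t\}$;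 base state updated only with $\delta^{\mathrm{base}}$. For decisions $d_t$: $V_T=\sum_{t\le T}\mathbf{1}\{Y_t=0,d_t=1\}$, $M_T=\sum_{t\le T}\mathbf{1}\{Y_t=1,d_t=0\}$, $\mathrm{Regret}_T(a,b)=aV_T+bM_T$ with $a,b>0$; base uses $d_t=\delta_t^{\mathrm{base}}$, DOMT uses $d_t=\delta_t$. *)

theory Defs
  imports "HOL-Probability.Probability" "HOL-Library.Landau_Symbols"
begin

text \<open>Time is indexed from 1. States Y t :: bool (True means Y_t = 1).
  The base procedure is a deterministic rule F: lambda_t^base = F t (past p-values);
  its virtual history is a deterministic function of p_1,...,p_{t-1}.\<close>

definition lam_base :: "(nat \<Rightarrow> (nat \<Rightarrow> real) \<Rightarrow> real) \<Rightarrow> (nat \<Rightarrow> 'a \<Rightarrow> real) \<Rightarrow> nat \<Rightarrow> 'a \<Rightarrow> real" where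
  "lam_base F p t \<omega> = F t (\<lambda>s. p s \<omega>)"

definition delta_base :: "(nat \<Rightarrow> (nat \<Rightarrow> real) \<Rightarrow> real) \<Rightarrow> (nat \<Rightarrow> 'a \<Rightarrow> real) \<Rightarrow> nat \<Rightarrow> 'a \<Rightarrow> bool" where
  "delta_base F p t \<omega> = (p t \<omega> \<le> lam_base F p t \<omega>)"

definition R_base :: "(nat \<Rightarrow> (nat \<Rightarrow> real) \<Rightarrow> real) \<Rightarrow> (nat \<Rightarrow> 'a \<Rightarrow> real) \<Rightarrow> nat \<Rightarrow> 'a \<Rightarrow> real" where
  "R_base F p T \<omega> = (\<Sum>t\<in>{1..T}. of_bool (delta_base F p t \<omega>))"

definition lam_domt :: "real \<Rightarrow> real \<Rightarrow> (nat \<Rightarrow> (nat \<Rightarrow> real) \<Rightarrow> real) \<Rightarrow> (nat \<Rightarrow> 'a \<Rightarrow> real)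
    \<Rightarrow> (nat \<Rightarrow> 'a \<Rightarrow> real) \<Rightarrow> nat \<Rightarrow> 'a \<Rightarrow> real" where
  "lam_domt \<kappa> \<alpha> F p Z t \<omega> = min 1 (lam_base F p t \<omega> + (\<kappa> * \<alpha> / sqrt (real t)) * Z t \<omega>)"

definition delta_domt :: "real \<Rightarrow> real \<Rightarrow> (nat \<Rightarrow> (nat \<Rightarrow> real) \<Rightarrow> real) \<Rightarrow> (nat \<Rightarrow> 'a \<Rightarrow> real)
    \<Rightarrow> (nat \<Rightarrow> 'a \<Rightarrow> real) \<Rightarrow> nat \<Rightarrow> 'a \<Rightarrow> bool" where
  "delta_domt \<kappa> \<alpha> F p Z t \<omega> = (p t \<omega> \<le> lam_domt \<kappa> \<alpha> F p Z t \<omega>)"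

definition V_count :: "(nat \<Rightarrow> 'a \<Rightarrow> bool) \<Rightarrow> (nat \<Rightarrow> 'a \<Rightarrow> bool) \<Rightarrow> nat \<Rightarrow> 'a \<Rightarrow> real" where
  "V_count Y d T \<omega> = (\<Sum>t\<in>{1..T}. of_bool (\<not> Y t \<omega> \<and> d t \<omega>))"

definition M_count :: "(nat \<Rightarrow> 'a \<Rightarrow> bool) \<Rightarrow> (nat \<Rightarrow> 'a \<Rightarrow> bool) \<Rightarrow> nat \<Rightarrow> 'a \<Rightarrow> real" where
  "M_count Y d T \<omega> = (\<Sum>t\<in>{1..T}. of_bool (Y t \<omega> \<and> \<not> d t \<omega>))"

definition regret :: "real \<Rightarrow> real \<Rightarrow> (nat \<Rightarrow> 'a \<Rightarrow> bool) \<Rightarrow> (nat \<Rightarrow> 'a \<Rightarrow> bool) \<Rightarrow> nat \<Rightarrow> 'a \<Rightarrow> real" where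
  "regret a b Y d T \<omega> = a * V_count Y d T \<omega> + b * M_count Y d T \<omega>"

definition hist_events :: "'a measure \<Rightarrow> (nat \<Rightarrow> 'a \<Rightarrow> bool) \<Rightarrow> (nat \<Rightarrow> 'a \<Rightarrow> real) \<Rightarrow> nat \<Rightarrow> 'a set set" where
  "hist_events M Y p t = sigma_sets (space M)
     ((\<Union>s. {Y s -` B \<inter> space M | B. True}) \<union>
      (\<Union>s\<in>{1..<t}. {p s -` B \<inter> space M | B. B \<in> sets borel}))"

definition Z_events :: "'a measure \<Rightarrow> (nat \<Rightarrow> 'a \<Rightarrow> real) \<Rightarrow> 'a set set" where
  "Z_events M Z = sigma_sets (space M) (\<Union>s. {Z s -` B \<inter> space M | B. B \<in> sets borel})"

definition data_events :: "'a measure \<Rightarrow> (nat \<Rightarrow> 'a \<Rightarrow> bool) \<Rightarrow> (nat \<Rightarrow> 'a \<Rightarrow> real) \<Rightarrow> 'a set set" where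
  "data_events M Y p = sigma_sets (space M)
     ((\<Union>s. {Y s -` B \<inter> space M | B. True}) \<union> (\<Union>s. {p s -` B \<inter> space M | B. B \<in> sets borel}))"

text \<open>Conditionally on the states and the past, p_t ~ Uniform[0,1] if Y_t = 0 and p_t ~ G if Y_t = 1
  (stated via the conditional CDF on every generating event).\<close>
definition cond_law :: "'a measure \<Rightarrow> (real \<Rightarrow> real) \<Rightarrow> (nat \<Rightarrow> 'a \<Rightarrow> bool) \<Rightarrow> (nat \<Rightarrow> 'a \<Rightarrow> real) \<Rightarrow> bool" where
  "cond_law M G Y p \<longleftrightarrow>
     (\<forall>t\<ge>1. \<forall>A\<in>hist_events M Y p t. \<forall>x\<in>{0..1}.
        measure M ({\<omega>\<in>space M. p t \<omega> \<le> x} \<inter> A)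
          = (\<integral>\<omega>. indicator A \<omega> * (if Y t \<omega> then G x else x) \<partial>M))"

end

theory Submission
  imports Defs "HOL-Real_Asymp.Real_Asymp"
begin

text \<open>The perturbed threshold changes the decision at time t only if p_t falls into the window
  (\<lambda>_t^base, min 1 (\<lambda>_t^base + \<epsilon>_t)]. The base threshold is a function of the past, and
  conditionally on the past p_t has the L-Lipschitz CDF G or the identity, so the window has
  probability at most 2 L \<epsilon>_t (condition on \<lambda>_t^base lying in a bin of width at most \<epsilon>_t).
  Each flip costs at most a + b, and \<Sum>_{t\<le>T} \<epsilon>_t \<le> 2 \<kappa> \<alpha> \<surd>T, so the expected regrets differ by
  O(\<surd>T) = o(T); together with the trivial bound (a + b) T and \<Omega>(T) for the base procedure this
  gives \<Theta>(T). The argument works for every realisation of Z in [0,1].\<close>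

lemma measurable_lam_base:
  assumes "\<And>t. p t \<in> borel_measurable M" "F t \<in> borel_measurable (PiM UNIV (\<lambda>_. borel))"
  shows "lam_base F p t \<in> borel_measurable M"
proof -
  have "(\<lambda>\<omega> s. p s \<omega>) \<in> measurable M (PiM UNIV (\<lambda>_. borel))"
    by (rule measurable_PiM_single') (use assms in auto)
  from measurable_comp[OF this assms(2)] show ?thesis
    unfolding lam_base_def by (simp add: o_def)
qed

lemma measurable_delta_base:
  assumes "\<And>t. p t \<in> borel_measurable M" "F t \<in> borel_measurable (PiM UNIV (\<lambda>_. borel))"
  shows "delta_base F p t \<in> measurable M (count_space UNIV)"
  unfolding delta_base_def using assms(1)[of t] measurable_lam_base[of p M F t, OF assms]
  by measurable

lemma measurable_delta_domt:
  assumes "\<And>t. p t \<in> borel_measurable M" "F t \<in> borel_measurable (PiM UNIV (\<lambda>_. borel))"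
    and "Z t \<in> borel_measurable M"
  shows "delta_domt \<kappa> \<alpha> F p Z t \<in> measurable M (count_space UNIV)"
  unfolding delta_domt_def lam_domt_def
  using assms(1)[of t] assms(3) measurable_lam_base[of p M F t, OF assms(1,2)] by measurable

lemma measurable_regret:
  assumes "\<And>t. Y t \<in> measurable M (count_space UNIV)" "\<And>t. d t \<in> measurable M (count_space UNIV)"
  shows "regret a b Y d T \<in> borel_measurable M"
proof -
  have of_bool_meas: "(\<lambda>x. (of_bool (P x) :: real)) \<in> borel_measurable M"
    if "P \<in> measurable M (count_space UNIV)" for P
    by (rule measurable_compose[OF that measurable_of_bool])
  show ?thesis unfolding regret_def V_count_def M_count_def
    by (intro borel_measurable_add borel_measurable_times borel_measurable_const
        borel_measurable_sum of_bool_meas pred_intros_logic assms)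
qed

lemma regret_nonneg:
  assumes "a \<ge> 0" "b \<ge> 0"
  shows "0 \<le> regret a b Y d T \<omega>"
  unfolding regret_def V_count_def M_count_def using assms by (simp add: sum_nonneg)

lemma regret_le:
  assumes "a \<ge> 0" "b \<ge> 0"
  shows "regret a b Y d T \<omega> \<le> (a + b) * real T"
proof -
  have count_le: "(\<Sum>t\<in>{1..T}. of_bool (P t) :: real) \<le> real T" for P
    using sum_bounded_above[of "{1..T}" "\<lambda>t. of_bool (P t) :: real" 1] by simp
  have "V_count Y d T \<omega> \<le> real T" "M_count Y d T \<omega> \<le> real T"
    unfolding V_count_def M_count_def by (rule count_le)+
  then have "a * V_count Y d T \<omega> + b * M_count Y d T \<omega> \<le> a * real T + b * real T"
    using assms by (intro add_mono mult_left_mono)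
  then show ?thesis unfolding regret_def by (simp add: algebra_simps)
qed

lemma regret_diff_le:
  assumes "a \<ge> 0" "b \<ge> 0"
  shows "\<bar>regret a b Y d T \<omega> - regret a b Y d' T \<omega>\<bar>
           \<le> (a + b) * (\<Sum>t\<in>{1..T}. of_bool (d t \<omega> \<noteq> d' t \<omega>))"
proof -
  define u where "u t = a * (of_bool (\<not> Y t \<omega> \<and> d t \<omega>) - of_bool (\<not> Y t \<omega> \<and> d' t \<omega>))
    + b * (of_bool (Y t \<omega> \<and> \<not> d t \<omega>) - of_bool (Y t \<omega> \<and> \<not> d' t \<omega>))" for t
  have "regret a b Y d T \<omega> - regret a b Y d' T \<omega> = (\<Sum>t\<in>{1..T}. u t)"
    unfolding u_def regret_def V_count_def M_count_def
    by (simp add: sum_subtractf sum.distrib sum_distrib_left algebra_simps)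
  then have "\<bar>regret a b Y d T \<omega> - regret a b Y d' T \<omega>\<bar> \<le> (\<Sum>t\<in>{1..T}. \<bar>u t\<bar>)"
    by (simp add: sum_abs)
  also have "\<dots> \<le> (\<Sum>t\<in>{1..T}. (a + b) * of_bool (d t \<omega> \<noteq> d' t \<omega>))"
    unfolding u_def using assms
    by (intro sum_mono) (cases "Y t \<omega>"; cases "d t \<omega>"; cases "d' t \<omega>"; simp)
  also have "\<dots> = (a + b) * (\<Sum>t\<in>{1..T}. of_bool (d t \<omega> \<noteq> d' t \<omega>))"
    by (rule sum_distrib_left[symmetric])
  finally show ?thesis .
qed

lemma (in finite_measure) integrable_regret:
  assumes "\<And>t. Y t \<in> measurable M (count_space UNIV)" "\<And>t. d t \<in> measurable M (count_space UNIV)"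
    and "a \<ge> 0" "b \<ge> 0"
  shows "integrable M (regret a b Y d T)"
proof (rule integrable_const_bound[where B = "(a + b) * real T"])
  show "AE \<omega> in M. norm (regret a b Y d T \<omega>) \<le> (a + b) * real T"
    using regret_nonneg[OF assms(3,4), of Y d T] regret_le[OF assms(3,4), of Y d T]
    by (intro AE_I2) simp
qed (rule measurable_regret[OF assms(1,2)])

lemma (in prob_space) expected_regret_bigo:
  assumes "\<And>t. Y t \<in> measurable M (count_space UNIV)" "\<And>t. d t \<in> measurable M (count_space UNIV)"
    and "a \<ge> 0" "b \<ge> 0"
  shows "(\<lambda>T. \<integral>\<omega>. regret a b Y d T \<omega> \<partial>M) \<in> O(\<lambda>T. real T)"
proof (intro bigoI[where c = "a + b"] always_eventually allI)
  fix T
  have "0 \<le> (\<integral>\<omega>. regret a b Y d T \<omega> \<partial>M)"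
    using assms by (intro integral_nonneg_AE AE_I2 regret_nonneg)
  moreover have "(\<integral>\<omega>. regret a b Y d T \<omega> \<partial>M) \<le> (\<integral>\<omega>. (a + b) * real T \<partial>M)"
    using assms by (intro integral_mono integrable_regret regret_le) auto
  ultimately show "norm (\<integral>\<omega>. regret a b Y d T \<omega> \<partial>M) \<le> (a + b) * norm (real T)"
    by (simp add: prob_space)
qed

lemma (in finite_measure) expected_regret_diff_le:
  assumes Y_meas: "\<And>t. Y t \<in> measurable M (count_space UNIV)"
    and d_meas: "\<And>t. d t \<in> measurable M (count_space UNIV)"
    and d'_meas: "\<And>t. d' t \<in> measurable M (count_space UNIV)"
    and ab: "a \<ge> 0" "b \<ge> 0"
    and E_sets: "\<And>t. E t \<in> sets M"
    and flips: "AE \<omega> in M. \<forall>t. d t \<omega> \<noteq> d' t \<omega> \<longrightarrow> \<omega> \<in> E t"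
  shows "\<bar>(\<integral>\<omega>. regret a b Y d T \<omega> \<partial>M) - (\<integral>\<omega>. regret a b Y d' T \<omega> \<partial>M)\<bar>
           \<le> (a + b) * (\<Sum>t\<in>{1..T}. measure M (E t))"
proof -
  let ?r = "regret a b Y d T" and ?r' = "regret a b Y d' T"
  have pointwise: "AE \<omega> in M. \<bar>?r \<omega> - ?r' \<omega>\<bar> \<le> (a + b) * (\<Sum>t\<in>{1..T}. indicator (E t) \<omega>)"
    using flips
  proof eventually_elim
    case (elim \<omega>)
    then have "(\<Sum>t\<in>{1..T}. of_bool (d t \<omega> \<noteq> d' t \<omega>)) \<le> (\<Sum>t\<in>{1..T}. indicator (E t) \<omega> :: real)"
      by (intro sum_mono) (auto simp: indicator_def)
    with ab have "(a + b) * (\<Sum>t\<in>{1..T}. of_bool (d t \<omega> \<noteq> d' t \<omega>))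
                    \<le> (a + b) * (\<Sum>t\<in>{1..T}. indicator (E t) \<omega>)"
      by (intro mult_left_mono) auto
    with regret_diff_le[OF ab] show ?case by (rule order_trans)
  qed
  have integrable_r: "integrable M ?r" and integrable_r': "integrable M ?r'"
    using Y_meas d_meas d'_meas ab by (auto intro!: integrable_regret)
  have integrable_E: "integrable M (indicator (E t) :: _ \<Rightarrow> real)" for t
    using E_sets[of t] by (simp add: integrable_indicator_iff less_top[symmetric])
  have "\<bar>(\<integral>\<omega>. ?r \<omega> \<partial>M) - (\<integral>\<omega>. ?r' \<omega> \<partial>M)\<bar> \<le> (\<integral>\<omega>. \<bar>?r \<omega> - ?r' \<omega>\<bar> \<partial>M)"
    using integral_norm_bound[of M "\<lambda>\<omega>. ?r \<omega> - ?r' \<omega>"] integrable_r integrable_r' by simp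
  also have "\<dots> \<le> (\<integral>\<omega>. (a + b) * (\<Sum>t\<in>{1..T}. indicator (E t) \<omega>) \<partial>M)"
    using integrable_r integrable_r' integrable_E by (intro integral_mono_AE pointwise) auto
  also have "\<dots> = (a + b) * (\<Sum>t\<in>{1..T}. measure M (E t))"
    using integrable_E E_sets by (simp add: integral_sum)
  finally show ?thesis .
qed

lemma sum_inverse_sqrt_le: "(\<Sum>t\<in>{1..T}. 1 / sqrt (real t)) \<le> 2 * sqrt (real T)"
proof (induction T)
  case 0
  then show ?case by simp
next
  case (Suc n)
  let ?a = "sqrt (real (Suc n))" and ?b = "sqrt (real n)"
  have "1 = (?a - ?b) * (?a + ?b)" by (simp add: algebra_simps)
  also have "\<dots> \<le> (?a - ?b) * (2 * ?a)" by (intro mult_left_mono) auto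
  finally have "1 \<le> (2 * ?a - 2 * ?b) * ?a" by (simp add: algebra_simps)
  then have "1 / ?a \<le> 2 * ?a - 2 * ?b" by (simp add: divide_le_eq)
  moreover have "(\<Sum>t\<in>{1..Suc n}. 1 / sqrt (real t)) = (\<Sum>t\<in>{1..n}. 1 / sqrt (real t)) + 1 / ?a"
    by simp
  ultimately show ?case using Suc.IH by linarith
qed

lemma hist_events_subset_sets:
  assumes "\<And>t. Y t \<in> measurable M (count_space UNIV)" "\<And>t. p t \<in> borel_measurable M"
  shows "hist_events M Y p t \<subseteq> sets M"
  unfolding hist_events_def
  by (rule sets.sigma_sets_subset) (use measurable_sets[OF assms(1)] measurable_sets[OF assms(2)] in auto)

lemma lam_base_vimage_in_hist_events:
  assumes p_meas: "\<And>t. p t \<in> borel_measurable M"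
    and F_meas: "F t \<in> borel_measurable (PiM UNIV (\<lambda>_. borel))"
    and F_past: "\<And>f g. (\<forall>s\<in>{1..<t}. f s = g s) \<Longrightarrow> F t f = F t g"
    and B: "B \<in> sets borel"
  shows "{\<omega>\<in>space M. lam_base F p t \<omega> \<in> B} \<in> hist_events M Y p t"
proof -
  define gen where "gen = (\<Union>s. {Y s -` B \<inter> space M |B. True})
    \<union> (\<Union>s\<in>{1..<t}. {p s -` B \<inter> space M |B. B \<in> sets borel})"
  define H where "H = sigma (space M) gen"
  have gen_Pow: "gen \<subseteq> Pow (space M)" unfolding gen_def by auto
  have sets_H: "sets H = hist_events M Y p t"
    unfolding H_def hist_events_def gen_def[symmetric] using gen_Pow by simp
  have space_H: "space H = space M" unfolding H_def using gen_Pow by simp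
  \<comment> \<open>Truncating the history after t - 1 makes it H-measurable without changing F t.\<close>
  define q where "q s \<omega> = (if s \<in> {1..<t} then p s \<omega> else 0)" for s \<omega>
  have q_meas: "q s \<in> borel_measurable H" for s
  proof (cases "s \<in> {1..<t}")
    case True
    show ?thesis
    proof (rule measurableI)
      fix A :: "real set"
      assume "A \<in> sets borel"
      with True have "p s -` A \<inter> space M \<in> gen" unfolding gen_def by blast
      moreover have "q s -` A \<inter> space H = p s -` A \<inter> space M"
        using True by (auto simp: q_def space_H)
      ultimately show "q s -` A \<inter> space H \<in> sets H"
        unfolding H_def using gen_Pow by (simp add: sigma_sets.Basic)
    qed simp
  next
    case False
    then have "q s = (\<lambda>_. 0)" by (auto simp: q_def)
    then show ?thesis by simp
  qed
  have "(\<lambda>\<omega> s. q s \<omega>) \<in> measurable H (PiM UNIV (\<lambda>_. borel))"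
    by (rule measurable_PiM_single') (use q_meas in auto)
  from measurable_comp[OF this F_meas]
  have "(\<lambda>\<omega>. F t (\<lambda>s. q s \<omega>)) \<in> borel_measurable H" by (simp add: o_def)
  moreover have "F t (\<lambda>s. q s \<omega>) = lam_base F p t \<omega>" for \<omega>
    unfolding lam_base_def by (rule F_past) (auto simp: q_def)
  ultimately show ?thesis
    using measurable_sets[of _ H borel B] B by (simp add: space_H sets_H vimage_def Int_def conj_commute)
qed

lemma cond_law_window_le:
  assumes P: "prob_space M"
    and Y_meas: "\<And>t. Y t \<in> measurable M (count_space UNIV)"
    and p_meas: "\<And>t. p t \<in> borel_measurable M"
    and law: "cond_law M G Y p"
    and G_lip: "L-lipschitz_on {0..1} G" and L1: "L \<ge> 1"
    and t: "t \<ge> 1" and A: "A \<in> hist_events M Y p t"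
    and lo_hi: "0 \<le> lo" "lo \<le> hi" "hi \<le> 1"
  shows "measure M ({\<omega>\<in>space M. lo < p t \<omega> \<and> p t \<omega> \<le> hi} \<inter> A) \<le> L * (hi - lo) * measure M A"
proof -
  interpret prob_space M by (rule P)
  have A_sets: "A \<in> sets M" using A hist_events_subset_sets[of Y M p, OF Y_meas p_meas] by blast
  define cdf where "cdf \<omega> x = (if Y t \<omega> then G x else x)" for \<omega> x
  define S where "S x = {\<omega>\<in>space M. p t \<omega> \<le> x} \<inter> A" for x
  have S_sets: "S x \<in> sets M" for x unfolding S_def using p_meas[of t] A_sets by measurable
  have integrable_cdf: "integrable M (\<lambda>\<omega>. indicator A \<omega> * cdf \<omega> x)" for x
  proof (rule integrable_const_bound[where B = "\<bar>G x\<bar> + \<bar>x\<bar>"])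
    show "(\<lambda>\<omega>. indicator A \<omega> * cdf \<omega> x) \<in> borel_measurable M"
      unfolding cdf_def using Y_meas[of t] A_sets by measurable
  qed (auto simp: indicator_def cdf_def)
  have measure_S: "measure M (S x) = (\<integral>\<omega>. indicator A \<omega> * cdf \<omega> x \<partial>M)" if "x \<in> {0..1}" for x
    using law t A that unfolding cond_law_def S_def cdf_def by blast
  have cdf_incr: "cdf \<omega> hi - cdf \<omega> lo \<le> L * (hi - lo)" for \<omega>
  proof -
    have "G hi - G lo \<le> L * (hi - lo)"
      using lipschitz_onD[OF G_lip, of hi lo] lo_hi by (simp add: dist_real_def)
    moreover have "hi - lo \<le> L * (hi - lo)" using L1 lo_hi by (simp add: mult_le_cancel_right1)
    ultimately show ?thesis by (simp add: cdf_def)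
  qed
  have "{\<omega>\<in>space M. lo < p t \<omega> \<and> p t \<omega> \<le> hi} \<inter> A = S hi - S lo" by (auto simp: S_def)
  then have "measure M ({\<omega>\<in>space M. lo < p t \<omega> \<and> p t \<omega> \<le> hi} \<inter> A)
               = measure M (S hi) - measure M (S lo)"
    using S_sets lo_hi(2) by (simp add: finite_measure_Diff subset_iff S_def)
  also have "\<dots> = (\<integral>\<omega>. indicator A \<omega> * cdf \<omega> hi - indicator A \<omega> * cdf \<omega> lo \<partial>M)"
    using lo_hi by (simp add: measure_S integrable_cdf)
  also have "\<dots> \<le> (\<integral>\<omega>. indicator A \<omega> * (L * (hi - lo)) \<partial>M)"
  proof (rule integral_mono)
    show "integrable M (\<lambda>\<omega>. indicator A \<omega> * (L * (hi - lo)))"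
      using A_sets by (simp add: integrable_indicator_iff less_top[symmetric])
    show "integrable M (\<lambda>\<omega>. indicator A \<omega> * cdf \<omega> hi - indicator A \<omega> * cdf \<omega> lo)"
      by (intro Bochner_Integration.integrable_diff integrable_cdf)
  qed (use cdf_incr in \<open>auto simp: indicator_def\<close>)
  also have "\<dots> = L * (hi - lo) * measure M A" using A_sets by (simp add: mult.commute)
  finally show ?thesis .
qed

lemma (in finite_measure) measure_le_of_disjoint_cover:
  assumes "finite K" "disjoint_family_on A K" "\<And>k. k \<in> K \<Longrightarrow> A k \<in> sets M"
    and "E \<in> sets M" "E \<subseteq> (\<Union>k\<in>K. A k)"
    and bound: "\<And>k. k \<in> K \<Longrightarrow> measure M (E \<inter> A k) \<le> C * measure M (A k)"
  shows "measure M E \<le> C * measure M (\<Union>k\<in>K. A k)"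
proof -
  have "E = (\<Union>k\<in>K. E \<inter> A k)" using assms(5) by blast
  then have "measure M E \<le> (\<Sum>k\<in>K. measure M (E \<inter> A k))"
    using assms by (metis finite_measure_subadditive_finite image_subset_iff sets.Int)
  also have "\<dots> \<le> (\<Sum>k\<in>K. C * measure M (A k))" by (intro sum_mono bound)
  also have "\<dots> = C * measure M (\<Union>k\<in>K. A k)"
    using assms by (simp add: sum_distrib_left finite_measure_finite_Union image_subset_iff)
  finally show ?thesis .
qed

lemma disjoint_family_on_intervals:
  fixes h :: real
  assumes "h > 0"
  shows "disjoint_family_on (\<lambda>k::nat. {real k * h ..< (real k + 1) * h}) K"
  unfolding disjoint_family_on_def
proof (intro ballI impI)
  fix i j :: nat
  assume "i \<noteq> j"
  have order: "real i < real j + 1" if "x \<in> {real i * h ..< (real i + 1) * h}"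
    "x \<in> {real j * h ..< (real j + 1) * h}" for x i j
  proof -
    have "h * real i < h * (real j + 1)" using that by (auto simp: algebra_simps)
    then show ?thesis using assms by simp
  qed
  have False if "x \<in> {real i * h ..< (real i + 1) * h}" "x \<in> {real j * h ..< (real j + 1) * h}" for x
    using order[OF that] order[OF that(2,1)] \<open>i \<noteq> j\<close> by linarith
  then show "{real i * h ..< (real i + 1) * h} \<inter> {real j * h ..< (real j + 1) * h} = {}" by blast
qed

lemma unit_interval_subset_intervals:
  assumes "real N > 0"
  shows "{0..1::real} \<subseteq> (\<Union>k\<in>{0..N}. {real k / real N ..< (real k + 1) / real N})"
proof
  fix x :: real
  assume x: "x \<in> {0..1}"
  define k where "k = nat \<lfloor>x * real N\<rfloor>"
  have "real k = of_int \<lfloor>x * real N\<rfloor>" using x assms unfolding k_def by simp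
  then have "real k \<le> x * real N" "x * real N < real k + 1" by linarith+
  moreover from this have "k \<le> N" using x assms
    by (smt (verit) mult_left_le_one_le of_nat_le_iff atLeastAtMost_iff)
  ultimately show "x \<in> (\<Union>k\<in>{0..N}. {real k / real N ..< (real k + 1) / real N})"
    using assms by (auto simp: field_simps)
qed

lemma measure_threshold_window_le:
  assumes P: "prob_space M"
    and Y_meas: "\<And>t. Y t \<in> measurable M (count_space UNIV)"
    and p_meas: "\<And>t. p t \<in> borel_measurable M"
    and law: "cond_law M G Y p"
    and G_lip: "L-lipschitz_on {0..1} G" and L1: "L \<ge> 1"
    and t: "t \<ge> 1" and \<epsilon>: "\<epsilon> \<ge> 0"
    and c_meas: "c \<in> borel_measurable M"
    and c_hist: "\<And>B. B \<in> sets borel \<Longrightarrow> {\<omega>\<in>space M. c \<omega> \<in> B} \<in> hist_events M Y p t"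
    and c_range: "\<And>\<omega>. c \<omega> \<in> {0..1}"
  shows "measure M {\<omega>\<in>space M. c \<omega> < p t \<omega> \<and> p t \<omega> \<le> min 1 (c \<omega> + \<epsilon>)} \<le> 2 * L * \<epsilon>"
proof (cases "\<epsilon> = 0")
  case True
  then have empty: "{\<omega>\<in>space M. c \<omega> < p t \<omega> \<and> p t \<omega> \<le> min 1 (c \<omega> + \<epsilon>)} = {}" by auto
  show ?thesis unfolding empty using True by simp
next
  case False
  interpret prob_space M by (rule P)
  define E where "E = {\<omega>\<in>space M. c \<omega> < p t \<omega> \<and> p t \<omega> \<le> min 1 (c \<omega> + \<epsilon>)}"
  obtain N :: nat where N: "1 / \<epsilon> < real N" using reals_Archimedean2 by blast
  with False \<epsilon> have N_pos: "real N > 0" by (smt (verit) divide_pos_pos)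
  define h where "h = 1 / real N"
  have h: "h > 0" "h \<le> \<epsilon>" unfolding h_def using N N_pos False \<epsilon> by (auto simp: field_simps)
  define A where "A k = {\<omega>\<in>space M. c \<omega> \<in> {real k * h ..< (real k + 1) * h}}" for k :: nat
  have A_hist: "A k \<in> hist_events M Y p t" for k unfolding A_def by (rule c_hist) simp
  then have A_sets: "A k \<in> sets M" for k using hist_events_subset_sets[of Y M p, OF Y_meas p_meas] by blast
  have bin: "measure M (E \<inter> A k) \<le> 2 * L * \<epsilon> * measure M (A k)" for k
  proof -
    define lo where "lo = min 1 (real k * h)"
    define hi where "hi = min 1 ((real k + 1) * h + \<epsilon>)"
    have lo_hi: "0 \<le> lo" "lo \<le> hi" "hi \<le> 1" "hi - lo \<le> 2 * \<epsilon>"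
      unfolding lo_def hi_def using h \<epsilon> by (auto simp: algebra_simps min_def)
    have "E \<inter> A k \<subseteq> {\<omega>\<in>space M. lo < p t \<omega> \<and> p t \<omega> \<le> hi} \<inter> A k"
      unfolding E_def A_def lo_def hi_def by auto
    then have "measure M (E \<inter> A k) \<le> measure M ({\<omega>\<in>space M. lo < p t \<omega> \<and> p t \<omega> \<le> hi} \<inter> A k)"
      using A_sets p_meas[of t] by (intro finite_measure_mono) (auto intro: sets.Int)
    also have "\<dots> \<le> L * (hi - lo) * measure M (A k)"
      by (rule cond_law_window_le[OF P Y_meas p_meas law G_lip L1 t A_hist lo_hi(1-3)])
    also have "\<dots> \<le> 2 * L * \<epsilon> * measure M (A k)"
      using lo_hi L1 by (intro mult_right_mono) auto
    finally show ?thesis .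
  qed
  have cover: "E \<subseteq> (\<Union>k\<in>{0..N}. A k)"
    using unit_interval_subset_intervals[OF N_pos] c_range
    unfolding E_def A_def h_def by (fastforce simp: field_simps)
  have disjoint: "disjoint_family_on A {0..N}"
    using disjoint_family_on_intervals[OF h(1), of "{0..N}"]
    unfolding disjoint_family_on_def A_def by blast
  have "measure M E \<le> 2 * L * \<epsilon> * measure M (\<Union>k\<in>{0..N}. A k)"
    using A_sets cover disjoint bin p_meas[of t] c_meas
    by (intro measure_le_of_disjoint_cover) (auto simp: E_def)
  also have "\<dots> \<le> 2 * L * \<epsilon>" using L1 \<epsilon> by (intro mult_left_le) auto
  finally show ?thesis unfolding E_def .
qed

lemma threshold_flip_imp_window:
  fixes c e z q :: real
  assumes "0 \<le> z" "z \<le> 1" "0 \<le> e" "c \<le> 1" "(q \<le> min 1 (c + e * z)) \<noteq> (q \<le> c)"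
  shows "c < q \<and> q \<le> min 1 (c + e)"
proof -
  have "0 \<le> e * z" "e * z \<le> e" using assms by (simp_all add: mult_left_le)
  then show ?thesis using assms(4,5) unfolding min_def by (auto split: if_splits)
qed

lemma AE_in_unit_interval_if_uniform:
  assumes "X \<in> borel_measurable M" "distr M lborel X = uniform_measure lborel {0..1}"
  shows "AE \<omega> in M. X \<omega> \<in> {0..1::real}"
proof -
  have "AE x in distr M lborel X. x \<in> {0..1::real}"
    unfolding assms(2) by (rule AE_uniform_measureI) auto
  then show ?thesis using assms(1) by (subst (asm) AE_distr_iff) auto
qed

lemma expected_regret_domt_base_diff_le:
  assumes P: "prob_space M"
    and Y_meas: "\<And>t. Y t \<in> measurable M (count_space UNIV)"
    and p_meas: "\<And>t. p t \<in> borel_measurable M"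
    and law: "cond_law M G Y p"
    and G_lip: "L-lipschitz_on {0..1} G" and L1: "L \<ge> 1"
    and F_meas: "\<And>t. F t \<in> borel_measurable (PiM UNIV (\<lambda>_. borel))"
    and F_range: "\<And>t f. F t f \<in> {0..1}"
    and F_past: "\<And>t f g. (\<forall>s\<in>{1..<t}. f s = g s) \<Longrightarrow> F t f = F t g"
    and Z_meas: "\<And>t. Z t \<in> borel_measurable M"
    and Z_range: "\<And>t. AE \<omega> in M. Z t \<omega> \<in> {0..1}"
    and \<kappa>: "\<kappa> \<ge> 0" and \<alpha>: "\<alpha> \<ge> 0" and ab: "a \<ge> 0" "b \<ge> 0"
  shows "\<bar>(\<integral>\<omega>. regret a b Y (delta_domt \<kappa> \<alpha> F p Z) T \<omega> \<partial>M)
            - (\<integral>\<omega>. regret a b Y (delta_base F p) T \<omega> \<partial>M)\<bar> \<le> 4 * (a + b) * L * \<kappa> * \<alpha> * sqrt (real T)"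
proof -
  interpret prob_space M by (rule P)
  define e where "e t = \<kappa> * \<alpha> / sqrt (real t)" for t :: nat
  have e_nonneg: "e t \<ge> 0" for t unfolding e_def using \<kappa> \<alpha> by simp
  define E where "E t = {\<omega>\<in>space M. lam_base F p t \<omega> < p t \<omega> \<and> p t \<omega> \<le> min 1 (lam_base F p t \<omega> + e t)}" for t
  have lam_meas: "lam_base F p t \<in> borel_measurable M" for t by (rule measurable_lam_base[OF p_meas F_meas])
  have E_sets: "E t \<in> sets M" for t unfolding E_def using lam_meas[of t] p_meas[of t] by measurable
  have prob_E: "measure M (E t) \<le> 2 * L * e t" if "t \<ge> 1" for t
    unfolding E_def
    using lam_base_vimage_in_hist_events[OF p_meas F_meas F_past] F_range
    by (intro measure_threshold_window_le[OF P Y_meas p_meas law G_lip L1 that e_nonneg lam_meas])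
       (auto simp: lam_base_def)
  have "AE \<omega> in M. \<forall>t. Z t \<omega> \<in> {0..1}" using Z_range by (simp add: AE_all_countable)
  then have flips: "AE \<omega> in M. \<forall>t. delta_domt \<kappa> \<alpha> F p Z t \<omega> \<noteq> delta_base F p t \<omega> \<longrightarrow> \<omega> \<in> E t"
  proof (rule AE_mp, intro AE_I2 impI allI)
    fix \<omega> t
    assume "\<omega> \<in> space M" "\<forall>t. Z t \<omega> \<in> {0..1}" "delta_domt \<kappa> \<alpha> F p Z t \<omega> \<noteq> delta_base F p t \<omega>"
    moreover have "lam_base F p t \<omega> \<le> 1" using F_range by (simp add: lam_base_def)
    ultimately show "\<omega> \<in> E t"
      using threshold_flip_imp_window[of "Z t \<omega>" "e t" "lam_base F p t \<omega>" "p t \<omega>"] e_nonneg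
      by (auto simp: E_def e_def delta_domt_def delta_base_def lam_domt_def)
  qed
  have "\<bar>(\<integral>\<omega>. regret a b Y (delta_domt \<kappa> \<alpha> F p Z) T \<omega> \<partial>M)
           - (\<integral>\<omega>. regret a b Y (delta_base F p) T \<omega> \<partial>M)\<bar> \<le> (a + b) * (\<Sum>t\<in>{1..T}. measure M (E t))"
    by (rule expected_regret_diff_le[OF Y_meas measurable_delta_domt[OF p_meas F_meas Z_meas]
          measurable_delta_base[OF p_meas F_meas] ab E_sets flips])
  also have "\<dots> \<le> (a + b) * (\<Sum>t\<in>{1..T}. 2 * L * e t)"
    using ab prob_E by (intro mult_left_mono sum_mono) auto
  also have "\<dots> = (a + b) * (2 * L * \<kappa> * \<alpha>) * (\<Sum>t\<in>{1..T}. 1 / sqrt (real t))"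
    by (simp add: e_def sum_distrib_left mult.assoc)
  also have "\<dots> \<le> (a + b) * (2 * L * \<kappa> * \<alpha>) * (2 * sqrt (real T))"
    using ab L1 \<kappa> \<alpha> by (intro mult_left_mono sum_inverse_sqrt_le) auto
  finally show ?thesis by (simp add: algebra_simps)
qed

lemma bigtheta_of_smallo_diff:
  fixes f g h :: "'a \<Rightarrow> real"
  assumes "f \<in> O[F](h)" "g \<in> \<Omega>[F](h)" "(\<lambda>x. f x - g x) \<in> o[F](h)"
  shows "f \<in> \<Theta>[F](h)"
proof
  show "f \<in> O[F](h)" by (fact assms(1))
  have "(\<lambda>x. f x - g x) \<in> o[F](g)"
    using assms(2,3) by (auto simp: bigomega_iff_bigo intro: landau_o.small_big_trans)
  then have "f \<in> \<Omega>[F](g)" by (intro asymp_equiv_imp_bigomega smallo_imp_asymp_equiv)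
  then show "f \<in> \<Omega>[F](h)" using assms(2) by (rule landau_omega.big_trans)
qed

theorem corollary2:
  fixes M :: "'a measure"
    and Y :: "nat \<Rightarrow> 'a \<Rightarrow> bool"
    and p Z :: "nat \<Rightarrow> 'a \<Rightarrow> real"
    and G :: "real \<Rightarrow> real"
    and L \<kappa> \<alpha> a b :: real
    and F :: "nat \<Rightarrow> (nat \<Rightarrow> real) \<Rightarrow> real"
  assumes P: "prob_space M"
    and Y_meas: "\<And>t. Y t \<in> measurable M (count_space UNIV)"
    and p_meas: "\<And>t. p t \<in> borel_measurable M"
    and G_cont: "continuous_on {0..1} G"
    and G_mono: "strict_mono_on {0..1} G"
    and G0: "G 0 = 0" and G1: "G 1 = 1"
    and G_lip: "L-lipschitz_on {0..1} G" and L1: "L \<ge> 1"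
    and law: "cond_law M G Y p"
    and F_meas: "\<And>t. F t \<in> borel_measurable (PiM UNIV (\<lambda>_. borel))"
    and F_range: "\<And>t f. F t f \<in> {0..1}"
    and F_past: "\<And>t f g. (\<forall>s\<in>{1..<t}. f s = g s) \<Longrightarrow> F t f = F t g"
    and base_rate: "\<exists>\<eta>>0. AE \<omega> in M.
        liminf (\<lambda>T. ereal (R_base F p T \<omega> / real T)) \<ge> ereal \<eta>"
    and Z_unif: "\<And>t. distr M lborel (Z t) = uniform_measure lborel {0..1}"
    and Z_iid: "prob_space.indep_vars M (\<lambda>_. borel) Z UNIV"
    and Z_indep: "prob_space.indep_set M (Z_events M Z) (data_events M Y p)"
    and \<kappa>: "\<kappa> \<ge> 0" and \<alpha>: "0 < \<alpha>" "\<alpha> < 1"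
    and ab: "a > 0" "b > 0"
    and base_lin: "(\<lambda>T. \<integral>\<omega>. regret a b Y (delta_base F p) T \<omega> \<partial>M) \<in> \<Omega>(\<lambda>T. real T)"
  shows "(\<lambda>T. (\<integral>\<omega>. regret a b Y (delta_domt \<kappa> \<alpha> F p Z) T \<omega> \<partial>M)
              - (\<integral>\<omega>. regret a b Y (delta_base F p) T \<omega> \<partial>M)) \<in> O(\<lambda>T. sqrt (real T)) \<and>
         (\<lambda>T. \<integral>\<omega>. regret a b Y (delta_domt \<kappa> \<alpha> F p Z) T \<omega> \<partial>M) \<in> \<Theta>(\<lambda>T. real T)"
proof -
  interpret prob_space M by (rule P)
  have Z_meas: "Z t \<in> borel_measurable M" for t using Z_iid by (auto simp: indep_vars_def)
  note diff_le = expected_regret_domt_base_diff_le[OF P Y_meas p_meas law G_lip L1 F_meas F_range F_past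
      Z_meas AE_in_unit_interval_if_uniform[OF Z_meas Z_unif] \<kappa> less_imp_le[OF \<alpha>(1)]
      less_imp_le[OF ab(1)] less_imp_le[OF ab(2)]]
  have "(\<lambda>T. (\<integral>\<omega>. regret a b Y (delta_domt \<kappa> \<alpha> F p Z) T \<omega> \<partial>M)
                 - (\<integral>\<omega>. regret a b Y (delta_base F p) T \<omega> \<partial>M)) \<in> O(\<lambda>T. sqrt (real T))"
    using diff_le by (intro bigoI[where c = "4 * (a + b) * L * \<kappa> * \<alpha>"] always_eventually allI) simp
  moreover have "(\<lambda>T. sqrt (real T)) \<in> o(\<lambda>T. real T)" by real_asymp
  moreover have "(\<lambda>T. \<integral>\<omega>. regret a b Y (delta_domt \<kappa> \<alpha> F p Z) T \<omega> \<partial>M) \<in> O(\<lambda>T. real T)"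
    using Y_meas measurable_delta_domt[OF p_meas F_meas Z_meas] ab
    by (intro expected_regret_bigo) auto
  ultimately show ?thesis
    using base_lin by (auto intro: bigtheta_of_smallo_diff landau_o.big_small_trans)
qed

end
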